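(* Let $a,b\in\mathbb{O}$ have norm one and let $\Phi:\mathbb{O}\to\mathbb{O}$ be a linear map. The following are equivalent: (1) $\Phi$ is an automorphism of $\mathbb{O}$ with $\Phi(a)=b$; (2) $\Phi$ is an algebra isomorphism from ${}^*\mathbb{O}_l(a,1)$ onto ${}^*\mathbb{O}_l(b,1)$ with $\Phi(1)=1$.
   Context: $\mathbb{O}$ is the real octonion algebra with conjugation $x\mapsto\bar x$. For norm-one $a\in\mathbb{O}$, ${}^*\mathbb{O}_l(a,1)$ is the normed space of $\mathbb{O}$ with product $x\odot y=(\bar x a)y$; it is an absolute-valued algebra with left unit $a$. *)

theory Defs
  imports "HOL-Analysis.Analysis"
begin

text \<open>Real octonions via the Cayley--Dickson construction, with the convention
  (a,b)(c,d) = (a c - d^* b, d a + b c^*), (a,b)^* = (a^*, -b).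
  The norm inherited from the product types is the Euclidean norm on R^8.\<close>

type_synonym quat = "complex \<times> complex"
type_synonym oct = "quat \<times> quat"

definition qmul :: "quat \<Rightarrow> quat \<Rightarrow> quat" where
  "qmul x y = (fst x * fst y - cnj (snd y) * snd x, snd y * fst x + snd x * cnj (fst y))"

definition qconj :: "quat \<Rightarrow> quat" where
  "qconj x = (cnj (fst x), - snd x)"

definition omul :: "oct \<Rightarrow> oct \<Rightarrow> oct" where
  "omul x y = (qmul (fst x) (fst y) - qmul (qconj (snd y)) (snd x),
               qmul (snd y) (fst x) + qmul (snd x) (qconj (fst y)))"

definition oconj :: "oct \<Rightarrow> oct" where
  "oconj x = (qconj (fst x), - snd x)"

definition oone :: oct where
  "oone = ((1, 0), (0, 0))"

text \<open>The product of *O_l(a,1): x \<odot> y = (conj x * a) * y.\<close>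
definition star_mul :: "oct \<Rightarrow> oct \<Rightarrow> oct \<Rightarrow> oct" where
  "star_mul a x y = omul (omul (oconj x) a) y"

definition alg_iso :: "(oct \<Rightarrow> oct \<Rightarrow> oct) \<Rightarrow> (oct \<Rightarrow> oct \<Rightarrow> oct) \<Rightarrow> (oct \<Rightarrow> oct) \<Rightarrow> bool" where
  "alg_iso m1 m2 \<Phi> \<longleftrightarrow> linear \<Phi> \<and> bij \<Phi> \<and> (\<forall>x y. \<Phi> (m1 x y) = m2 (\<Phi> x) (\<Phi> y))"

definition oct_automorphism :: "(oct \<Rightarrow> oct) \<Rightarrow> bool" where
  "oct_automorphism \<Phi> \<longleftrightarrow> alg_iso omul omul \<Phi>"

end

theory Submission
  imports Defs
begin

text \<open>An automorphism fixes 1 and, since every octonion satisfies the quadratic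
  equation x x = 2 Re(x) x - |x|^2 1, it preserves real parts and hence commutes
  with conjugation; so it carries (conj(x) a) y to (conj(\<Phi> x) \<Phi>(a)) \<Phi>(y).
  Conversely, putting y = 1 and then x = 1 in the star identity gives \<Phi>(a) = b and
  \<Phi>(conj(x) a) = conj(\<Phi> x) b. Since x \<mapsto> conj(x) a is onto for |a| = 1 (with inverse
  u \<mapsto> conj(u conj(a)), by the identity (u conj(a)) a = |a|^2 u), the star identity
  then says that \<Phi> is multiplicative.\<close>

definition oct_re :: "oct \<Rightarrow> real" where
  "oct_re x = Re (fst (fst x))"

lemma oct_eq_iff:
  "(x::oct) = y \<longleftrightarrow>
     Re (fst (fst x)) = Re (fst (fst y)) \<and> Im (fst (fst x)) = Im (fst (fst y)) \<and>
     Re (snd (fst x)) = Re (snd (fst y)) \<and> Im (snd (fst x)) = Im (snd (fst y)) \<and>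
     Re (fst (snd x)) = Re (fst (snd y)) \<and> Im (fst (snd x)) = Im (fst (snd y)) \<and>
     Re (snd (snd x)) = Re (snd (snd y)) \<and> Im (snd (snd x)) = Im (snd (snd y))"
  by (auto simp: prod_eq_iff complex_eq_iff)

lemmas oct_simps = oct_eq_iff omul_def oconj_def qmul_def qconj_def oone_def oct_re_def

lemma norm_oct_squared:
  "norm (x::oct) ^ 2 =
     (Re (fst (fst x)))\<^sup>2 + (Im (fst (fst x)))\<^sup>2 + (Re (snd (fst x)))\<^sup>2 + (Im (snd (fst x)))\<^sup>2 +
     (Re (fst (snd x)))\<^sup>2 + (Im (fst (snd x)))\<^sup>2 + (Re (snd (snd x)))\<^sup>2 + (Im (snd (snd x)))\<^sup>2"
proof -
  have pair: "norm (p, q) ^ 2 = norm p ^ 2 + norm q ^ 2"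
    for p :: "'a::real_normed_vector" and q :: "'b::real_normed_vector"
    by (simp add: norm_Pair)
  show ?thesis
    by (cases x) (auto simp: pair cmod_power2)
qed

lemma omul_oone_left [simp]: "omul oone x = x"
  by (simp add: oct_simps)

lemma omul_oone_right [simp]: "omul x oone = x"
  by (simp add: oct_simps)

lemma oconj_oconj [simp]: "oconj (oconj x) = x"
  by (simp add: oct_simps)

lemma oconj_oone [simp]: "oconj oone = oone"
  by (simp add: oct_simps)

lemma oct_re_scaleR_oone [simp]: "oct_re (c *\<^sub>R oone) = c"
  by (simp add: oct_simps)

lemma oconj_eq_real_part: "oconj x = (2 * oct_re x) *\<^sub>R oone - x"
  by (simp add: oct_simps)

lemma omul_self: "omul x x = (2 * oct_re x) *\<^sub>R x - (norm x ^ 2) *\<^sub>R oone"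
  unfolding norm_oct_squared by (simp add: oct_simps algebra_simps power2_eq_square)

lemma omul_omul_oconj_right: "omul (omul u (oconj a)) a = (norm a ^ 2) *\<^sub>R u"
  unfolding norm_oct_squared by (simp add: oct_simps algebra_simps power2_eq_square)

lemma alg_iso_omul_imp_oone:
  assumes "alg_iso omul omul \<Phi>"
  shows "\<Phi> oone = oone"
proof -
  from assms have mult: "\<And>x y. \<Phi> (omul x y) = omul (\<Phi> x) (\<Phi> y)" and "surj \<Phi>"
    unfolding alg_iso_def by (auto simp: bij_is_surj)
  then obtain y where y: "\<Phi> y = oone" by (metis surjD)
  have "\<Phi> oone = omul (\<Phi> oone) (\<Phi> y)" using y by simp
  also have "\<dots> = oone" using mult[of oone y] y by simp
  finally show ?thesis .
qed

lemma oct_automorphism_oct_re: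
  assumes "oct_automorphism \<Phi>"
  shows "oct_re (\<Phi> x) = oct_re x"
proof (rule ccontr)
  \<comment> \<open>Comparing the quadratic equations of x and \<Phi> x would force \<Phi> x, hence x, to be the
    same real multiple of 1.\<close>
  assume ne: "oct_re (\<Phi> x) \<noteq> oct_re x"
  from assms have mult: "\<And>x y. \<Phi> (omul x y) = omul (\<Phi> x) (\<Phi> y)"
    and "inj \<Phi>" and lin: "linear \<Phi>"
    unfolding oct_automorphism_def alg_iso_def by (auto simp: bij_is_inj)
  have one: "\<Phi> oone = oone"
    using assms alg_iso_omul_imp_oone unfolding oct_automorphism_def by blast
  have "(2 * oct_re x) *\<^sub>R \<Phi> x - (norm x ^ 2) *\<^sub>R oone = \<Phi> (omul x x)"
    using lin one by (simp add: omul_self linear_diff linear_scale)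
  also have "\<dots> = (2 * oct_re (\<Phi> x)) *\<^sub>R \<Phi> x - (norm (\<Phi> x) ^ 2) *\<^sub>R oone"
    using mult[of x x] by (simp add: omul_self)
  finally have "(2 * oct_re x - 2 * oct_re (\<Phi> x)) *\<^sub>R \<Phi> x = (norm x ^ 2 - norm (\<Phi> x) ^ 2) *\<^sub>R oone"
    by (simp add: algebra_simps)
  moreover have "2 * oct_re x - 2 * oct_re (\<Phi> x) \<noteq> 0"
    using ne by simp
  ultimately obtain c where c: "\<Phi> x = c *\<^sub>R oone"
    by (metis eq_vector_fraction_iff)
  also have "\<dots> = \<Phi> (c *\<^sub>R oone)"
    using lin one by (simp add: linear_scale)
  finally have "x = c *\<^sub>R oone"
    using \<open>inj \<Phi>\<close> by (meson injD)
  with c ne show False by simp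
qed

lemma oct_automorphism_oconj:
  assumes "oct_automorphism \<Phi>"
  shows "\<Phi> (oconj x) = oconj (\<Phi> x)"
proof -
  have "linear \<Phi>" and one: "\<Phi> oone = oone"
    using assms alg_iso_omul_imp_oone unfolding oct_automorphism_def alg_iso_def by blast+
  then show ?thesis
    using oct_automorphism_oct_re[OF assms, of x]
    by (simp add: oconj_eq_real_part linear_diff linear_scale)
qed

lemma oct_automorphism_imp_star_iso:
  assumes "oct_automorphism \<Phi>"
  shows "alg_iso (star_mul a) (star_mul (\<Phi> a)) \<Phi>"
  using assms oct_automorphism_oconj[OF assms]
  unfolding oct_automorphism_def alg_iso_def star_mul_def by (simp del: split_paired_All)

lemma star_iso_imp_oct_automorphism:
  assumes "norm a = 1" and iso: "alg_iso (star_mul a) (star_mul b) \<Phi>" and one: "\<Phi> oone = oone"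
  shows "oct_automorphism \<Phi>" and "\<Phi> a = b"
proof -
  from iso have star: "\<And>x y. \<Phi> (omul (omul (oconj x) a) y) = omul (omul (oconj (\<Phi> x)) b) (\<Phi> y)"
    unfolding alg_iso_def star_mul_def by blast
  have left: "\<Phi> (omul (oconj x) a) = omul (oconj (\<Phi> x)) b" for x
    using star[of x oone] one by simp
  show "\<Phi> a = b"
    using left[of oone] one by simp
  have "\<Phi> (omul u y) = omul (\<Phi> u) (\<Phi> y)" for u y
  proof -
    define x where "x = oconj (omul u (oconj a))"
    have "omul (oconj x) a = u"
      unfolding x_def using omul_omul_oconj_right[of u a] \<open>norm a = 1\<close> by simp
    then show ?thesis
      using star[of x y] left[of x] by simp
  qed
  with iso show "oct_automorphism \<Phi>"
    unfolding oct_automorphism_def alg_iso_def by blast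
qed

theorem proposition4:
  fixes a b :: oct and \<Phi> :: "oct \<Rightarrow> oct"
  assumes "norm a = 1" and "norm b = 1" and "linear \<Phi>"
  shows "(oct_automorphism \<Phi> \<and> \<Phi> a = b) \<longleftrightarrow>
         (alg_iso (star_mul a) (star_mul b) \<Phi> \<and> \<Phi> oone = oone)"
proof
  assume "oct_automorphism \<Phi> \<and> \<Phi> a = b"
  then show "alg_iso (star_mul a) (star_mul b) \<Phi> \<and> \<Phi> oone = oone"
    using oct_automorphism_imp_star_iso alg_iso_omul_imp_oone
    unfolding oct_automorphism_def by blast
next
  assume "alg_iso (star_mul a) (star_mul b) \<Phi> \<and> \<Phi> oone = oone"
  then show "oct_automorphism \<Phi> \<and> \<Phi> a = b"
    using star_iso_imp_oct_automorphism[OF \<open>norm a = 1\<close>] by blast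
qed

end
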